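(* In the wake-up algorithm with advice described in the context, let $B_0$ be the set of nodes $v$ with advice bit $g_v=0$. Then the message complexity during all phases in which some $v\in B_0$ is the actor is $O\left(\sqrt{\frac{n^3}{2^\beta}}\log n\right)$ with high probability, where $\beta=\max\{\lfloor(\alpha-1)/2\rfloor,0\}$.
   Context: Model: connected graph on $n$ nodes, unique IDs in $[n]$, synchronous port numbering $\mathsf{CONGEST}$ model with quantum routing (classical link plus quantum channel per edge; sleeping nodes wake only on classical messages, and a quantum message to a sleeping node causes a $-1$ phase reflection, awake nodes reflect $+1$). Message complexity counts classical messages plus, per round, the maximum number of quantum messages over all computational-basis configurations of the global state. Each node gets at most $\alpha$ advice bits from an oracle that knows everything including the initially awake set $A_1$. Sets: $A_0=\emptyset$, $S_i=(\bigcup_{u\in A_i}N_u)\setminus(A_i\cup A_{i-1})$, $A_{i+1}=S_i$; listing $A_i$ as $v_1^{(i)},\dots$ by increasing ID, $S^{(i)}_{v_j^{(i)}}=N_{v_j^{(i)}}\cap(S_i\setminus\bigcup_{k<j}S^{(i)}_{v_k^{(i)}})$; $v$ is an actor of epoch $i$ iff $v\in A_i$. Advice (for $\alpha\ge3$; no advice if $\alpha\le2$): advice tree $\mathcal T_v$ — complete binary tree of depth $\log_2 n_v'$ ($n_v'$ smallest power of 2 $\ge\deg(v)$) with leaves labeled $1,\dots,\deg(v)$ left to right and remaining rightmost leaves labeled $\deg(v)$; a bit string gives a root path and its associated port range is the interval between smallest and largest leaf labels below the path's endpoint; $P_v^\beta(w)$ is the range of the length-$\beta$ string whose range contains $v$'s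 port to $w$. For actor $v$ of epoch $i$: $g_v=1$ iff $|S_v^{(i)}|\ge2^\beta$; $\Lambda_v$ empty if $g_v=1$ or $S_v^{(i)}=\emptyset$, else encodes $P_v^\beta(w_1)$, $w_1$ the smallest-ID node in $S_v^{(i)}$; with $S_1'=S_v^{(i)}$ and $S_j'$ obtained from $S_{j-1}'$ by removing nodes reached by $v$ via ports in $P_v^\beta(w_{j-1})$, $w_j$ the smallest-ID node of $S_j'$, the proxy advice $\Pi_{w_{j-1}}$ stored at $w_{j-1}$ encodes $P_v^\beta(w_j)$ (empty if $S_j'=\emptyset$). Algorithm: epochs of $n$ phases, each phase $Cn\log n$ rounds; initially awake nodes are actors in epoch 1; a node woken during epoch $i$ is an actor in epoch $i+1$, only once, in the phase equal to its ID. Actor $v$: if $g_v=1$ or $\alpha\le2$, it runs $\mathsf{IteratedQuantumSearch}$ (which w.h.p. finds all ports $p$ in a given range $X$ with $f(p)=1$, using $O(\sqrt{|X|\max\{C,1\}}\log n)$ rounds and messages, $C=|f^{-1}(1)|$) over all its ports with $f(p)=1$ iff the neighbor on port $p$ is asleep, waking each found neighbor by a classical message; if $g_v=0$ and $\Lambda_v$ is empty, it does nothing; otherwise it runs $\mathsf{IteratedQuantumSearch}$ on the range of $\Lambda_v$, waking sleeping neighbors there; a woken neighbor $w$ with proxy advice $\Pi_w$ sends it to $v$, and $v$ repeats on the range of the received proxy advice until no new proxy advice arrives. "With high probability": probability at least $1-1/n^c$.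
   Formalization: The bound on the message complexity of the phases whose actor lies in $B_0$ is claimed only for advice sizes $\alpha$ with $2^\beta$ at most n. The paper assumes this as well. *)

theory Defs
  imports "HOL-Probability.Probability"
begin

text \<open>Nodes are identified with their IDs 1..n. adj is the (symmetric, irreflexive)
 edge relation; port v p is the neighbour of v reached through port p, for p in 1..deg v.\<close>

definition nbrs :: "(nat \<Rightarrow> nat \<Rightarrow> bool) \<Rightarrow> nat \<Rightarrow> nat set" where
  "nbrs adj v = {u. adj v u}"

definition deg :: "(nat \<Rightarrow> nat \<Rightarrow> bool) \<Rightarrow> nat \<Rightarrow> nat" where
  "deg adj v = card (nbrs adj v)"

definition portnum :: "(nat \<Rightarrow> nat \<Rightarrow> bool) \<Rightarrow> (nat \<Rightarrow> nat \<Rightarrow> nat) \<Rightarrow> nat \<Rightarrow> nat \<Rightarrow> nat" where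
  "portnum adj port v w = inv_into {1..deg adj v} (port v) w"

definition wakeup_instance ::
  "nat \<Rightarrow> (nat \<Rightarrow> nat \<Rightarrow> bool) \<Rightarrow> (nat \<Rightarrow> nat \<Rightarrow> nat) \<Rightarrow> nat set \<Rightarrow> bool" where
  "wakeup_instance n adj port A1 \<longleftrightarrow>
     1 \<le> n
   \<and> (\<forall>u v. adj u v \<longrightarrow> u \<in> {1..n} \<and> v \<in> {1..n} \<and> u \<noteq> v \<and> adj v u)
   \<and> (\<forall>u\<in>{1..n}. \<forall>v\<in>{1..n}. adj\<^sup>*\<^sup>* u v)
   \<and> (\<forall>v\<in>{1..n}. bij_betw (port v) {1..deg adj v} (nbrs adj v))
   \<and> A1 \<subseteq> {1..n} \<and> A1 \<noteq> {}"

fun Aset :: "(nat \<Rightarrow> nat \<Rightarrow> bool) \<Rightarrow> nat set \<Rightarrow> nat \<Rightarrow> nat set" where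
  "Aset adj A1 0 = {}"
| "Aset adj A1 (Suc 0) = A1"
| "Aset adj A1 (Suc (Suc i)) =
     (\<Union>u\<in>Aset adj A1 (Suc i). nbrs adj u) - (Aset adj A1 (Suc i) \<union> Aset adj A1 i)"

definition Sset :: "(nat \<Rightarrow> nat \<Rightarrow> bool) \<Rightarrow> nat set \<Rightarrow> nat \<Rightarrow> nat set" where
  "Sset adj A1 i = (\<Union>u\<in>Aset adj A1 i. nbrs adj u) - (Aset adj A1 i \<union> Aset adj A1 (i - 1))"

text \<open>Scum adj A1 i k = union of S_u^(i) over actors u of epoch i with ID u < k.\<close>
fun Scum :: "(nat \<Rightarrow> nat \<Rightarrow> bool) \<Rightarrow> nat set \<Rightarrow> nat \<Rightarrow> nat \<Rightarrow> nat set" where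
  "Scum adj A1 i 0 = {}"
| "Scum adj A1 i (Suc k) = Scum adj A1 i k \<union>
     (if k \<in> Aset adj A1 i then nbrs adj k \<inter> (Sset adj A1 i - Scum adj A1 i k) else {})"

definition Sv :: "(nat \<Rightarrow> nat \<Rightarrow> bool) \<Rightarrow> nat set \<Rightarrow> nat \<Rightarrow> nat \<Rightarrow> nat set" where
  "Sv adj A1 i v = nbrs adj v \<inter> (Sset adj A1 i - Scum adj A1 i v)"

definition epoch_of :: "(nat \<Rightarrow> nat \<Rightarrow> bool) \<Rightarrow> nat set \<Rightarrow> nat \<Rightarrow> nat" where
  "epoch_of adj A1 v = (LEAST i. 1 \<le> i \<and> v \<in> Aset adj A1 i)"

definition Sadv :: "(nat \<Rightarrow> nat \<Rightarrow> bool) \<Rightarrow> nat set \<Rightarrow> nat \<Rightarrow> nat set" where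
  "Sadv adj A1 v = Sv adj A1 (epoch_of adj A1 v) v"

definition beta :: "nat \<Rightarrow> nat" where
  "beta \<alpha> = nat (max \<lfloor>(real \<alpha> - 1) / 2\<rfloor> 0)"

definition gbit :: "(nat \<Rightarrow> nat \<Rightarrow> bool) \<Rightarrow> nat set \<Rightarrow> nat \<Rightarrow> nat \<Rightarrow> bool" where
  "gbit adj A1 \<alpha> v \<longleftrightarrow> 2 ^ beta \<alpha> \<le> card (Sadv adj A1 v)"

text \<open>B_0: nodes holding advice bit g_v = 0 (advice exists only for alpha >= 3).\<close>
definition B0 :: "nat \<Rightarrow> (nat \<Rightarrow> nat \<Rightarrow> bool) \<Rightarrow> nat set \<Rightarrow> nat \<Rightarrow> nat set" where
  "B0 n adj A1 \<alpha> = {v \<in> {1..n}. 3 \<le> \<alpha> \<and> \<not> gbit adj A1 \<alpha> v}"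

text \<open>Advice tree: depth D = log2 of the smallest power of two >= d; leaf k (0-based,
 left to right) is labelled min (k+1) d.  A bit string of length l selects a block of
 2^(D-l) consecutive leaves; its port range is between the smallest and largest label.
 Strings longer than the depth are truncated to the depth (l = min beta D).\<close>
definition tree_depth :: "nat \<Rightarrow> nat" where
  "tree_depth d = (LEAST k. d \<le> 2 ^ k)"

definition leaf_label :: "nat \<Rightarrow> nat \<Rightarrow> nat" where
  "leaf_label d k = min (k + 1) d"

definition prange :: "nat \<Rightarrow> nat \<Rightarrow> nat \<Rightarrow> nat set" where
  "prange d \<beta> p =
     (let D = tree_depth d; l = min \<beta> D; blk = 2 ^ (D - l); b = (p - 1) div blk
      in {leaf_label d (b * blk) .. leaf_label d (b * blk + blk - 1)})"

definition Prange :: "(nat \<Rightarrow> nat \<Rightarrow> bool) \<Rightarrow> (nat \<Rightarrow> nat \<Rightarrow> nat) \<Rightarrow> nat \<Rightarrow> nat \<Rightarrow> nat \<Rightarrow> nat set" where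
  "Prange adj port \<beta> v w = prange (deg adj v) \<beta> (portnum adj port v w)"

fun chainS :: "(nat \<Rightarrow> nat \<Rightarrow> bool) \<Rightarrow> (nat \<Rightarrow> nat \<Rightarrow> nat) \<Rightarrow> nat set \<Rightarrow> nat \<Rightarrow> nat \<Rightarrow> nat \<Rightarrow> nat set" where
  "chainS adj port A1 \<alpha> v 0 = Sadv adj A1 v"
| "chainS adj port A1 \<alpha> v (Suc j) =
     (let S = chainS adj port A1 \<alpha> v j in
      if S = {} then {}
      else S - {u \<in> S. portnum adj port v u \<in> Prange adj port (beta \<alpha>) v (Min S)})"

definition Lambda :: "(nat \<Rightarrow> nat \<Rightarrow> bool) \<Rightarrow> (nat \<Rightarrow> nat \<Rightarrow> nat) \<Rightarrow> nat set \<Rightarrow> nat \<Rightarrow> nat \<Rightarrow> nat set option" where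
  "Lambda adj port A1 \<alpha> v =
     (if 3 \<le> \<alpha> \<and> \<not> gbit adj A1 \<alpha> v \<and> Sadv adj A1 v \<noteq> {}
      then Some (Prange adj port (beta \<alpha>) v (Min (Sadv adj A1 v))) else None)"

definition proxy_cond :: "nat \<Rightarrow> (nat \<Rightarrow> nat \<Rightarrow> bool) \<Rightarrow> (nat \<Rightarrow> nat \<Rightarrow> nat) \<Rightarrow> nat set \<Rightarrow> nat \<Rightarrow> nat \<Rightarrow> nat \<times> nat \<Rightarrow> bool" where
  "proxy_cond n adj port A1 \<alpha> w vj \<longleftrightarrow>
     (let v = fst vj; j = snd vj in
        v \<in> B0 n adj A1 \<alpha> \<and> chainS adj port A1 \<alpha> v j \<noteq> {}
      \<and> w = Min (chainS adj port A1 \<alpha> v j) \<and> chainS adj port A1 \<alpha> v (Suc j) \<noteq> {})"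

text \<open>Proxy advice Pi_w (None = empty).\<close>
definition Pi_adv :: "nat \<Rightarrow> (nat \<Rightarrow> nat \<Rightarrow> bool) \<Rightarrow> (nat \<Rightarrow> nat \<Rightarrow> nat) \<Rightarrow> nat set \<Rightarrow> nat \<Rightarrow> nat \<Rightarrow> nat set option" where
  "Pi_adv n adj port A1 \<alpha> w =
     (if \<exists>vj. proxy_cond n adj port A1 \<alpha> w vj
      then (let vj = (SOME vj. proxy_cond n adj port A1 \<alpha> w vj); v = fst vj; j = snd vj in
            Some (Prange adj port (beta \<alpha>) v (Min (chainS adj port A1 \<alpha> v (Suc j)))))
      else None)"

text \<open>Q n X T: distribution of (set of ports reported, number of messages used) of
 IteratedQuantumSearch on port range X when T is the set of ports in X with f = 1.\<close>
type_synonym qsearch = "nat \<Rightarrow> nat set \<Rightarrow> nat set \<Rightarrow> (nat set \<times> nat) pmf"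

definition qsearch_spec :: "qsearch \<Rightarrow> real \<Rightarrow> real \<Rightarrow> bool" where
  "qsearch_spec Q K0 d \<longleftrightarrow>
     (\<forall>n X T. finite X \<longrightarrow> T \<subseteq> X \<longrightarrow>
        measure_pmf.prob (Q n X T)
          {(F, m). F = T \<and> real m \<le> K0 * sqrt (real (card X) * real (max (card T) 1)) * ln (real n)}
        \<ge> 1 - 1 / real n powr d)"

text \<open>Loop of a B0-actor v: search a range, wake the found sleeping neighbours with one
 classical message each; each woken node with proxy advice sends it to v (one message);
 repeat on received ranges.  State: (awake set, messages of this phase).\<close>
fun b0loop :: "qsearch \<Rightarrow> nat \<Rightarrow> (nat \<Rightarrow> nat \<Rightarrow> bool) \<Rightarrow> (nat \<Rightarrow> nat \<Rightarrow> nat) \<Rightarrow>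
    (nat \<Rightarrow> nat set option) \<Rightarrow> nat \<Rightarrow> nat \<Rightarrow> nat set list \<Rightarrow> nat set \<times> nat \<Rightarrow> (nat set \<times> nat) pmf" where
  "b0loop Q n adj port Px v 0 rs st = return_pmf st"
| "b0loop Q n adj port Px v (Suc k) [] st = return_pmf st"
| "b0loop Q n adj port Px v (Suc k) (R # rs) st =
     bind_pmf (Q n R {p \<in> R. port v p \<notin> fst st}) (\<lambda>(F, m).
       (let Fp = F \<inter> {1..deg adj v};
            W = port v ` Fp - fst st;
            props = map (\<lambda>u. the (Px u)) (sorted_list_of_set {u \<in> W. Px u \<noteq> None})
        in b0loop Q n adj port Px v k (rs @ props)
             (fst st \<union> W, snd st + m + card Fp + length props)))"

text \<open>One phase of actor v, given the awake set; returns (new awake set, messages of the phase).\<close>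
definition act :: "qsearch \<Rightarrow> nat \<Rightarrow> (nat \<Rightarrow> nat \<Rightarrow> bool) \<Rightarrow> (nat \<Rightarrow> nat \<Rightarrow> nat) \<Rightarrow> nat set \<Rightarrow> nat \<Rightarrow>
    nat \<Rightarrow> nat set \<Rightarrow> (nat set \<times> nat) pmf" where
  "act Q n adj port A1 \<alpha> v aw =
     (if \<alpha> \<le> 2 \<or> gbit adj A1 \<alpha> v then
        bind_pmf (Q n {1..deg adj v} {p \<in> {1..deg adj v}. port v p \<notin> aw}) (\<lambda>(F, m).
          (let Fp = F \<inter> {1..deg adj v} in return_pmf (aw \<union> port v ` Fp, m + card Fp)))
      else (case Lambda adj port A1 \<alpha> v of
              None \<Rightarrow> return_pmf (aw, 0)
            | Some R \<Rightarrow> b0loop Q n adj port (Pi_adv n adj port A1 \<alpha>) v (n + 1) [R] (aw, 0)))"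

text \<open>Actors of an epoch act in increasing ID order; state (awake set, messages counted
 so far in phases whose actor is in B0).\<close>
fun run_actors :: "qsearch \<Rightarrow> nat \<Rightarrow> (nat \<Rightarrow> nat \<Rightarrow> bool) \<Rightarrow> (nat \<Rightarrow> nat \<Rightarrow> nat) \<Rightarrow> nat set \<Rightarrow> nat \<Rightarrow>
    nat list \<Rightarrow> nat set \<times> nat \<Rightarrow> (nat set \<times> nat) pmf" where
  "run_actors Q n adj port A1 \<alpha> [] st = return_pmf st"
| "run_actors Q n adj port A1 \<alpha> (v # vs) st =
     bind_pmf (act Q n adj port A1 \<alpha> v (fst st)) (\<lambda>(aw', m).
       run_actors Q n adj port A1 \<alpha> vs
         (aw', snd st + (if v \<in> B0 n adj A1 \<alpha> then m else 0)))"

text \<open>Nodes woken during an epoch are the actors of the next epoch.\<close>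
fun epochs :: "qsearch \<Rightarrow> nat \<Rightarrow> (nat \<Rightarrow> nat \<Rightarrow> bool) \<Rightarrow> (nat \<Rightarrow> nat \<Rightarrow> nat) \<Rightarrow> nat set \<Rightarrow> nat \<Rightarrow>
    nat \<Rightarrow> nat set \<Rightarrow> nat set \<times> nat \<Rightarrow> (nat set \<times> nat) pmf" where
  "epochs Q n adj port A1 \<alpha> 0 Act st = return_pmf st"
| "epochs Q n adj port A1 \<alpha> (Suc k) Act st =
     bind_pmf (run_actors Q n adj port A1 \<alpha> (sorted_list_of_set Act) st) (\<lambda>st'.
       epochs Q n adj port A1 \<alpha> k (fst st' - fst st) st')"

definition B0_cost :: "qsearch \<Rightarrow> nat \<Rightarrow> (nat \<Rightarrow> nat \<Rightarrow> bool) \<Rightarrow> (nat \<Rightarrow> nat \<Rightarrow> nat) \<Rightarrow> nat set \<Rightarrow> nat \<Rightarrow> nat pmf" where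
  "B0_cost Q n adj port A1 \<alpha> = map_pmf snd (epochs Q n adj port A1 \<alpha> (n + 1) A1 (A1, 0))"

end

theory Submission
  imports Defs
begin

text \<open>An actor \<open>v \<in> B\<^sub>0\<close> wakes \<open>S\<^sub>v\<close> in rounds. Each round searches a port range of at most
  \<open>2n/2\<^sup>\<beta>\<close> ports, wakes the \<open>t \<ge> 1\<close> sleeping nodes of the current chain set that lie in it,
  and the smallest of them returns the next range as proxy advice. A successful search costs
  \<open>O(\<surd>(nt/2\<^sup>\<beta>) log n)\<close> messages, so a round costs \<open>O(\<surd>(n/2\<^sup>\<beta>) log n)\<close> per woken node.
  The sets \<open>S\<^sub>v\<close> are disjoint, hence all \<open>B\<^sub>0\<close> phases together cost
  \<open>O(\<surd>(n/2\<^sup>\<beta>) log n) \<cdot> n\<close>. There are at most \<open>2n\<close> searches, each failing with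
  probability at most \<open>1/n\<^sup>c\<^sup>+\<^sup>2\<close>, so by the union bound all succeed with probability
  at least \<open>1 - 1/n\<^sup>c\<close>; this works for every real \<open>c\<close>.\<close>

lemma image_filter_not_in: "f ` {x \<in> X. f x \<notin> W} = f ` X - W"
  by blast

lemma card_filter_not_in:
  assumes "inj_on f X" "P \<subseteq> X"
  shows "card {p \<in> P. f p \<notin> W} = card (f ` P - W)"
proof -
  have "inj_on f {p \<in> P. f p \<notin> W}"
    by (rule inj_on_subset[OF assms(1)]) (use assms(2) in blast)
  then show ?thesis unfolding image_filter_not_in[symmetric] by (rule card_image[symmetric])
qed

section \<open>Union bound for composed distributions\<close>

lemma measure_pmf_prob_bind:
  "measure_pmf.prob (bind_pmf p f) A = (\<integral>x. measure_pmf.prob (f x) A \<partial>measure_pmf p)"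
  by (simp add: measure_pmf_bind measure_pmf.measure_bind[where N="count_space UNIV"]
      measure_subprob)

lemma measure_pmf_prob_bind_ge:
  assumes p: "1 - \<delta> \<le> measure_pmf.prob p A"
    and f: "\<And>x. x \<in> A \<Longrightarrow> x \<in> set_pmf p \<Longrightarrow> 1 - \<delta>' \<le> measure_pmf.prob (f x) B"
    and \<delta>': "0 \<le> \<delta>'"
  shows "1 - (\<delta> + \<delta>') \<le> measure_pmf.prob (bind_pmf p f) B"
proof -
  have "AE x in measure_pmf p. indicator A x - \<delta>' \<le> measure_pmf.prob (f x) B"
    unfolding AE_measure_pmf_iff using f \<delta>'
      by (auto simp: indicator_def intro: order_trans[OF _ measure_nonneg])
  moreover have "integrable (measure_pmf p) (\<lambda>x. indicator A x - \<delta>')"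
    by (intro measure_pmf.integrable_const_bound[where B="1 + \<delta>'"])
      (use \<delta>' in \<open>auto simp: indicator_def\<close>)
  moreover have "integrable (measure_pmf p) (\<lambda>x. measure_pmf.prob (f x) B)"
    by (intro measure_pmf.integrable_const_bound[where B=1]) auto
  ultimately have "(\<integral>x. indicator A x - \<delta>' \<partial>measure_pmf p)
      \<le> (\<integral>x. measure_pmf.prob (f x) B \<partial>measure_pmf p)"
    by (intro integral_mono_AE)
  moreover have "(\<integral>x. indicator A x - \<delta>' \<partial>measure_pmf p) = measure_pmf.prob p A - \<delta>'"
    by (subst Bochner_Integration.integral_diff)
      (auto simp: measure_pmf.prob_space intro: measure_pmf.integrable_const_bound[where B=1])
  ultimately show ?thesis using p by (simp add: measure_pmf_prob_bind)
qed

section \<open>Layers of the breadth-first wake-up\<close>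

locale wakeup_graph =
  fixes n :: nat and adj :: "nat \<Rightarrow> nat \<Rightarrow> bool" and port :: "nat \<Rightarrow> nat \<Rightarrow> nat"
    and A1 :: "nat set"
  assumes wakeup_instance: "wakeup_instance n adj port A1"
begin

abbreviation A :: "nat \<Rightarrow> nat set" where
  "A \<equiv> Aset adj A1"

definition awake_by :: "nat \<Rightarrow> nat set" where
  "awake_by j = (\<Union>i\<le>j. A i)"

lemma n_pos: "1 \<le> n"
  using wakeup_instance by (simp add: wakeup_instance_def)

lemma adj_sym: "adj u v \<Longrightarrow> adj v u"
  using wakeup_instance by (simp add: wakeup_instance_def)

lemma adj_nodes: "adj u v \<Longrightarrow> u \<in> {1..n} \<and> v \<in> {1..n}"
  using wakeup_instance by (simp add: wakeup_instance_def)

lemma A1_subset: "A1 \<subseteq> {1..n}"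
  using wakeup_instance by (simp add: wakeup_instance_def)

lemma A1_nonempty: "A1 \<noteq> {}"
  using wakeup_instance by (simp add: wakeup_instance_def)

lemma connected: "u \<in> {1..n} \<Longrightarrow> v \<in> {1..n} \<Longrightarrow> adj\<^sup>*\<^sup>* u v"
  using wakeup_instance by (simp add: wakeup_instance_def)

lemma bij_betw_port: "v \<in> {1..n} \<Longrightarrow> bij_betw (port v) {1..deg adj v} (nbrs adj v)"
  using wakeup_instance by (simp add: wakeup_instance_def)

lemma nbrs_subset: "nbrs adj v \<subseteq> {1..n}"
  using adj_nodes by (auto simp: nbrs_def)

lemma finite_nbrs: "finite (nbrs adj v)"
  using nbrs_subset finite_subset by blast

lemma deg_le: "deg adj v \<le> n"
  unfolding deg_def using card_mono[OF _ nbrs_subset] by simp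

lemma Aset_subset: "A i \<subseteq> {1..n}"
proof (cases i)
  case (Suc k)
  then show ?thesis using A1_subset nbrs_subset by (cases k) (auto simp: subset_iff)
qed simp

lemma finite_Aset: "finite (A i)"
  using Aset_subset finite_subset by blast

lemma Sset_eq_Aset_Suc: "1 \<le> j \<Longrightarrow> Sset adj A1 j = A (Suc j)"
  by (cases j) (auto simp: Sset_def)

lemma nbrs_Aset: "1 \<le> j \<Longrightarrow> v \<in> A j \<Longrightarrow> nbrs adj v \<subseteq> A (j - 1) \<union> A j \<union> A (Suc j)"
  using Sset_eq_Aset_Suc[of j] unfolding Sset_def by auto

lemma Aset_Suc_disjoint: "i \<le> j \<Longrightarrow> A (Suc j) \<inter> A i = {}"
proof (induction j arbitrary: i)
  case 0
  then show ?case by simp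
next
  case (Suc j)
  show ?case
  proof (rule ccontr)
    assume "A (Suc (Suc j)) \<inter> A i \<noteq> {}"
    then obtain x where x: "x \<in> A (Suc (Suc j))" "x \<in> A i" by blast
    then obtain y where y: "y \<in> A (Suc j)" "adj y x" "x \<notin> A (Suc j)" "x \<notin> A j"
      by (auto simp: nbrs_def)
    have "i \<noteq> Suc j" "i \<noteq> j" using x y by auto
    with Suc.prems have ij: "Suc i \<le> j" by simp
    have "i \<noteq> 0" using x(2) by (cases i) auto
    have "y \<in> nbrs adj x" using y adj_sym by (simp add: nbrs_def)
    then have "y \<in> A (i - 1) \<or> y \<in> A i \<or> y \<in> A (Suc i)"
      using nbrs_Aset[of i x] x \<open>i \<noteq> 0\<close> by auto
    moreover have "i - 1 \<le> j" "i \<le> j" using ij by auto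
    ultimately show False using Suc.IH[of "i - 1"] Suc.IH[of i] Suc.IH[of "Suc i"] ij y(1) by blast
  qed
qed

lemma Aset_disjoint:
  assumes "i \<noteq> k"
  shows "A i \<inter> A k = {}"
proof (cases "i < k")
  case True
  then obtain j where "k = Suc j" "i \<le> j" by (cases k) auto
  then show ?thesis using Aset_Suc_disjoint by blast
next
  case False
  with assms obtain j where "i = Suc j" "k \<le> j" by (cases i) auto
  then show ?thesis using Aset_Suc_disjoint by blast
qed

lemma awake_by_Suc: "awake_by (Suc j) = awake_by j \<union> A (Suc j)"
  by (simp add: awake_by_def atMost_Suc sup_commute)

lemma awake_by_subset: "awake_by j \<subseteq> {1..n}"
  using Aset_subset by (auto simp: awake_by_def)

lemma finite_awake_by: "finite (awake_by j)"
  using awake_by_subset finite_subset by blast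

lemma Aset_subset_awake_by: "i \<le> j \<Longrightarrow> A i \<subseteq> awake_by j"
  by (auto simp: awake_by_def)

lemma Aset_Suc_disjoint_awake_by: "A (Suc j) \<inter> awake_by j = {}"
  using Aset_Suc_disjoint by (auto simp: awake_by_def)

lemma nbrs_actor_subset: "1 \<le> j \<Longrightarrow> v \<in> A j \<Longrightarrow> nbrs adj v \<subseteq> awake_by j \<union> Sset adj A1 j"
  using nbrs_Aset[of j v] Sset_eq_Aset_Suc[of j] Aset_subset_awake_by[of "j - 1" j]
    Aset_subset_awake_by[of j j] by auto

lemma epoch_of_eq: "1 \<le> j \<Longrightarrow> v \<in> A j \<Longrightarrow> epoch_of adj A1 v = j"
  unfolding epoch_of_def
proof (rule Least_equality)
  show "j \<le> i" if "1 \<le> j" "v \<in> A j" "1 \<le> i \<and> v \<in> A i" for i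
    using that Aset_disjoint[of j i] by (cases "j = i") auto
qed simp

lemma ex_Aset: "x \<in> {1..n} \<Longrightarrow> \<exists>i\<ge>1. x \<in> A i"
proof -
  assume x: "x \<in> {1..n}"
  obtain a where a: "a \<in> A1" using A1_nonempty by blast
  then have "adj\<^sup>*\<^sup>* a x" using connected x A1_subset by blast
  then show ?thesis
  proof (induction rule: rtranclp_induct)
    case base
    then show ?case using a by (intro exI[of _ 1]) simp
  next
    case (step y z)
    then obtain i where i: "1 \<le> i" "y \<in> A i" by blast
    then have "z \<in> A (i - 1) \<or> z \<in> A i \<or> z \<in> A (Suc i)"
      using nbrs_Aset[of i y] step(2) by (auto simp: nbrs_def)
    moreover have "1 \<le> i - 1" if "z \<in> A (i - 1)"
      using that by (cases "i - 1") auto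
    ultimately show ?case using i(1) le_SucI by blast
  qed
qed

lemma in_Aset_epoch_of: "x \<in> {1..n} \<Longrightarrow> 1 \<le> epoch_of adj A1 x \<and> x \<in> A (epoch_of adj A1 x)"
  using ex_Aset epoch_of_eq by metis

lemma Scum_eq: "Scum adj A1 j k = (\<Union>u\<in>{u\<in>A j. u < k}. nbrs adj u) \<inter> Sset adj A1 j"
proof (induction k)
  case (Suc k)
  have "{u\<in>A j. u < Suc k} = {u\<in>A j. u < k} \<union> (if k \<in> A j then {k} else {})"
    by (auto simp: less_Suc_eq)
  then show ?case using Suc by auto
qed simp

lemma Sadv_eq_Sv: "1 \<le> j \<Longrightarrow> v \<in> A j \<Longrightarrow> Sadv adj A1 v = Sv adj A1 j v"
  using epoch_of_eq by (simp add: Sadv_def)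

lemma Sadv_subset_nbrs: "Sadv adj A1 v \<subseteq> nbrs adj v"
  by (auto simp: Sadv_def Sv_def)

lemma finite_Sadv: "finite (Sadv adj A1 v)"
  using Sadv_subset_nbrs finite_nbrs finite_subset by blast

lemma nbrs_minus_awake:
  assumes "1 \<le> j" "v \<in> A j"
  shows "nbrs adj v - (awake_by j \<union> Scum adj A1 j v) = Sadv adj A1 v"
proof -
  have "awake_by j \<inter> Sset adj A1 j = {}"
    using Aset_Suc_disjoint_awake_by Sset_eq_Aset_Suc[OF assms(1)] by blast
  then show ?thesis
    using nbrs_actor_subset[OF assms] Sadv_eq_Sv[OF assms] Scum_eq[of j v] by (auto simp: Sv_def)
qed

lemma Scum_Suc_actor:
  "1 \<le> j \<Longrightarrow> v \<in> A j \<Longrightarrow> Scum adj A1 j (Suc v) = Scum adj A1 j v \<union> Sadv adj A1 v"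
  by (simp add: Sadv_eq_Sv Sv_def)

lemma finite_Scum_awake: "1 \<le> j \<Longrightarrow> finite (awake_by j \<union> Scum adj A1 j k)"
  using finite_awake_by finite_Aset[of "Suc j"] Sset_eq_Aset_Suc[of j] Scum_eq[of j k]
  by (auto intro: finite_subset[of "Scum adj A1 j k" "Sset adj A1 j"])

lemma card_actor_step:
  assumes j: "1 \<le> j" and v: "v \<in> A j"
  shows "card (awake_by j \<union> Scum adj A1 j v \<union> Sadv adj A1 v)
      = card (awake_by j \<union> Scum adj A1 j v) + card (Sadv adj A1 v)"
    and "card (Sset adj A1 j - Scum adj A1 j v)
      = card (Sset adj A1 j - Scum adj A1 j (Suc v)) + card (Sadv adj A1 v)"
proof -
  let ?W = "awake_by j \<union> Scum adj A1 j v" and ?Sv = "Sadv adj A1 v" and ?Ss = "Sset adj A1 j"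
  have "finite ?W" by (rule finite_Scum_awake[OF j])
  moreover have "?W \<inter> ?Sv = {}" using nbrs_minus_awake[OF j v] by blast
  ultimately show "card (?W \<union> ?Sv) = card ?W + card ?Sv"
    using finite_Sadv by (simp add: card_Un_disjoint)
  have "?Sv \<subseteq> ?Ss - Scum adj A1 j v" using Sadv_eq_Sv[OF j v] by (auto simp: Sv_def)
  then have "?Ss - Scum adj A1 j v = (?Ss - Scum adj A1 j (Suc v)) \<union> ?Sv"
    unfolding Scum_Suc_actor[OF j v] by blast
  moreover have "(?Ss - Scum adj A1 j (Suc v)) \<inter> ?Sv = {}"
    unfolding Scum_Suc_actor[OF j v] by blast
  ultimately show "card (?Ss - Scum adj A1 j v) = card (?Ss - Scum adj A1 j (Suc v)) + card ?Sv"
    using finite_Sadv[of v] finite_Aset[of "Suc j"] Sset_eq_Aset_Suc[OF j]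
    by (simp add: card_Un_disjoint)
qed

lemma Sadv_owner_unique:
  assumes v: "v \<in> {1..n}" and v': "v' \<in> {1..n}"
    and u: "u \<in> Sadv adj A1 v" "u \<in> Sadv adj A1 v'"
  shows "v = v'"
proof -
  define i where "i = epoch_of adj A1 v"
  define i' where "i' = epoch_of adj A1 v'"
  have i: "1 \<le> i" "v \<in> A i" and i': "1 \<le> i'" "v' \<in> A i'"
    using in_Aset_epoch_of[OF v] in_Aset_epoch_of[OF v'] i_def i'_def by auto
  have u1: "u \<in> Sv adj A1 i v" and u2: "u \<in> Sv adj A1 i' v'"
    using u i_def i'_def by (simp_all add: Sadv_def)
  have "u \<in> A (Suc i)" "u \<in> A (Suc i')"
    using u1 u2 Sset_eq_Aset_Suc[OF i(1)] Sset_eq_Aset_Suc[OF i'(1)] by (auto simp: Sv_def)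
  then have "i = i'" using Aset_disjoint[of "Suc i" "Suc i'"] by auto
  show ?thesis
  proof (rule ccontr)
    assume "v \<noteq> v'"
    then consider "v < v'" | "v' < v" by linarith
    then show False
    proof cases
      case 1
      then have "u \<in> Scum adj A1 i v'" using u1 i unfolding Scum_eq by (auto simp: Sv_def)
      then show False using u2 \<open>i = i'\<close> by (auto simp: Sv_def)
    next
      case 2
      then have "u \<in> Scum adj A1 i v" using u2 i' \<open>i = i'\<close> unfolding Scum_eq by (auto simp: Sv_def)
      then show False using u1 by (auto simp: Sv_def)
    qed
  qed
qed

lemma portnum_in_ports:
  assumes "v \<in> {1..n}" "u \<in> nbrs adj v"
  shows "portnum adj port v u \<in> {1..deg adj v}" "port v (portnum adj port v u) = u"
proof -
  have "u \<in> port v ` {1..deg adj v}"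
    using bij_betw_port[OF assms(1)] assms(2) by (simp add: bij_betw_def)
  then show "portnum adj port v u \<in> {1..deg adj v}" "port v (portnum adj port v u) = u"
    unfolding portnum_def by (rule inv_into_into, rule f_inv_into_f)
qed

lemma port_in_nbrs:
  assumes "v \<in> {1..n}" "p \<in> {1..deg adj v}"
  shows "port v p \<in> nbrs adj v" "portnum adj port v (port v p) = p"
proof -
  have bij: "bij_betw (port v) {1..deg adj v} (nbrs adj v)" by (rule bij_betw_port[OF assms(1)])
  show "port v p \<in> nbrs adj v" using bij_betwE[OF bij] assms(2) by blast
  show "portnum adj port v (port v p) = p"
    unfolding portnum_def by (rule inv_into_f_f[OF bij_betw_imp_inj_on[OF bij] assms(2)])
qed

lemma port_image_ports: "v \<in> {1..n} \<Longrightarrow> port v ` {1..deg adj v} = nbrs adj v"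
  using bij_betw_port by (simp add: bij_betw_def)

lemma card_sleeping_ports:
  assumes "v \<in> {1..n}" "P \<subseteq> {1..deg adj v}"
  shows "card {p \<in> P. port v p \<notin> W} = card (port v ` P - W)"
  using card_filter_not_in[OF bij_betw_imp_inj_on[OF bij_betw_port] assms(2)] assms(1) .

end

section \<open>Port ranges of the advice tree\<close>

lemma prange_eq:
  fixes d \<beta> p :: nat
  defines "blk \<equiv> 2 ^ (tree_depth d - min \<beta> (tree_depth d))"
  defines "b \<equiv> (p - 1) div blk"
  shows "prange d \<beta> p = {min (b * blk + 1) d .. min (b * blk + blk) d}"
proof -
  have "1 \<le> blk" unfolding blk_def by simp
  then have "b * blk + blk - 1 + 1 = b * blk + blk" by simp
  then show ?thesis
    unfolding prange_def Let_def leaf_label_def blk_def[symmetric] b_def[symmetric] by (simp only:)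
qed

lemma prange_mem:
  assumes p: "1 \<le> p" "p \<le> d"
  shows "p \<in> prange d \<beta> p"
proof -
  define blk :: nat where "blk = 2 ^ (tree_depth d - min \<beta> (tree_depth d))"
  define b where "b = (p - 1) div blk"
  have "0 < blk" unfolding blk_def by simp
  then have "b * blk \<le> p - 1" "p - 1 < b * blk + blk"
    unfolding b_def using div_mult_mod_eq[of "p - 1" blk] mod_less_divisor[of blk "p - 1"]
    by linarith+
  moreover have "prange d \<beta> p = {min (b * blk + 1) d .. min (b * blk + blk) d}"
    unfolding blk_def b_def by (rule prange_eq)
  ultimately show ?thesis using p by auto
qed

lemma prange_subset: "1 \<le> d \<Longrightarrow> prange d \<beta> p \<subseteq> {1..d}"
  unfolding prange_def Let_def leaf_label_def by auto

lemma card_prange_le: "card (prange d \<beta> p) \<le> 2 ^ (tree_depth d - min \<beta> (tree_depth d))"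
proof -
  define blk :: nat where "blk = 2 ^ (tree_depth d - min \<beta> (tree_depth d))"
  define b where "b = (p - 1) div blk"
  have "0 < blk" unfolding blk_def by simp
  have "prange d \<beta> p = {min (b * blk + 1) d .. min (b * blk + blk) d}"
    unfolding blk_def b_def by (rule prange_eq)
  then have "card (prange d \<beta> p) = Suc (min (b * blk + blk) d) - min (b * blk + 1) d"
    by simp
  also have "\<dots> \<le> blk" using \<open>0 < blk\<close> by (cases "b * blk + 1 \<le> d") auto
  finally show ?thesis unfolding blk_def .
qed

lemma two_pow_tree_depth_le: "1 \<le> N \<Longrightarrow> d \<le> N \<Longrightarrow> (2::nat) ^ tree_depth d \<le> 2 * N"
proof (cases "tree_depth d")
  case (Suc D)
  have "\<not> d \<le> 2 ^ D"
  proof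
    assume "d \<le> 2 ^ D"
    then have "tree_depth d \<le> D" unfolding tree_depth_def by (rule Least_le)
    then show False using Suc by simp
  qed
  then show "1 \<le> N \<Longrightarrow> d \<le> N \<Longrightarrow> ?thesis" using Suc by simp
qed simp

text \<open>The factor 2 comes from rounding the degree up to a power of two.\<close>
lemma card_prange_bound:
  assumes "1 \<le> N" "d \<le> N" "2 ^ \<beta> \<le> N"
  shows "card (prange d \<beta> p) * 2 ^ \<beta> \<le> 2 * N"
proof -
  have "card (prange d \<beta> p) * 2 ^ \<beta> \<le> 2 ^ (tree_depth d - min \<beta> (tree_depth d)) * 2 ^ \<beta>"
    by (rule mult_le_mono1[OF card_prange_le])
  also have "\<dots> \<le> 2 * N"
  proof (cases "\<beta> \<le> tree_depth d")
    case True
    then have "(2::nat) ^ (tree_depth d - min \<beta> (tree_depth d)) * 2 ^ \<beta> = 2 ^ tree_depth d"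
      by (simp add: power_add[symmetric])
    then show ?thesis using two_pow_tree_depth_le[OF assms(1,2)] by simp
  next
    case False
    then show ?thesis using assms(3) by simp
  qed
  finally show ?thesis .
qed

section \<open>Rounds of an actor in \<open>B\<^sub>0\<close>\<close>

lemma b0loop_Nil: "b0loop Q n adj port P v k [] st = return_pmf st"
  by (cases k) simp_all

locale advice_setting = wakeup_graph +
  fixes \<alpha> :: nat
  assumes two_pow_beta_le: "2 ^ beta \<alpha> \<le> n"
begin

abbreviation S :: "nat \<Rightarrow> nat \<Rightarrow> nat set" where
  "S v j \<equiv> chainS adj port A1 \<alpha> v j"

abbreviation R :: "nat \<Rightarrow> nat \<Rightarrow> nat set" where
  "R v j \<equiv> Prange adj port (beta \<alpha>) v (Min (S v j))"

abbreviation Px :: "nat \<Rightarrow> nat set option" where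
  "Px \<equiv> Pi_adv n adj port A1 \<alpha>"

definition pending_ranges :: "nat \<Rightarrow> nat \<Rightarrow> nat set list" where
  "pending_ranges v j = (if S v j = {} then [] else [R v j])"

lemma B0_nodes: "v \<in> B0 n adj A1 \<alpha> \<Longrightarrow> v \<in> {1..n}"
  by (simp add: B0_def)

lemma chainS_Suc_subset: "S v (Suc j) \<subseteq> S v j"
  by (auto simp: Let_def)

lemma chainS_Suc:
  "S v j \<noteq> {} \<Longrightarrow> S v (Suc j) = S v j - {u \<in> S v j. portnum adj port v u \<in> R v j}"
  by (simp add: Let_def)

declare chainS.simps(2)[simp del]

lemma chainS_antimono: "j \<le> j' \<Longrightarrow> S v j' \<subseteq> S v j"
proof (induction j' rule: dec_induct)
  case (step j')
  then show ?case using chainS_Suc_subset[of v j'] by blast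
qed simp

lemma chainS_subset_Sadv: "S v j \<subseteq> Sadv adj A1 v"
  using chainS_antimono[of 0 j v] by simp

lemma finite_chainS: "finite (S v j)"
  using chainS_subset_Sadv finite_Sadv by (rule finite_subset)

lemma Min_chainS:
  assumes v: "v \<in> {1..n}" and ne: "S v j \<noteq> {}"
  shows "Min (S v j) \<in> S v j - S v (Suc j)"
proof -
  have Min: "Min (S v j) \<in> S v j" using Min_in[OF finite_chainS ne] .
  then have "Min (S v j) \<in> nbrs adj v" using chainS_subset_Sadv Sadv_subset_nbrs by blast
  then have "portnum adj port v (Min (S v j)) \<in> {1..deg adj v}" by (rule portnum_in_ports[OF v])
  then have "portnum adj port v (Min (S v j)) \<in> R v j" unfolding Prange_def
    by (auto intro: prange_mem)
  then show ?thesis using Min chainS_Suc[OF ne] by blast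
qed

lemma card_chainS_Suc_less:
  assumes v: "v \<in> {1..n}" and ne: "S v j \<noteq> {}"
  shows "card (S v (Suc j)) < card (S v j)"
  by (rule psubset_card_mono[OF finite_chainS])
    (use Min_chainS[OF v ne] chainS_Suc_subset[of v j] in blast)

lemma card_Sadv_minus_chainS_Suc:
  "card (Sadv adj A1 v - S v (Suc j)) = card (Sadv adj A1 v - S v j) + card (S v j - S v (Suc j))"
proof -
  have "Sadv adj A1 v - S v (Suc j) = (Sadv adj A1 v - S v j) \<union> (S v j - S v (Suc j))"
    using chainS_Suc_subset[of v j] chainS_subset_Sadv[of v j] by blast
  moreover have "(Sadv adj A1 v - S v j) \<inter> (S v j - S v (Suc j)) = {}" by blast
  ultimately show ?thesis using finite_Sadv[of v] finite_chainS[of v j]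
    by (simp add: card_Un_disjoint)
qed

lemma R_subset_ports:
  assumes v: "v \<in> {1..n}" and ne: "S v j \<noteq> {}"
  shows "R v j \<subseteq> {1..deg adj v}"
proof -
  have "Min (S v j) \<in> nbrs adj v"
    using Min_chainS[OF v ne] chainS_subset_Sadv Sadv_subset_nbrs by blast
  then have "1 \<le> deg adj v" using portnum_in_ports(1)[OF v] by fastforce
  then show ?thesis unfolding Prange_def by (rule prange_subset)
qed

lemma card_R_le: "real (card (R v j)) \<le> 2 * real n / 2 ^ beta \<alpha>"
proof -
  have "card (R v j) * 2 ^ beta \<alpha> \<le> 2 * n"
    unfolding Prange_def by (rule card_prange_bound[OF n_pos deg_le two_pow_beta_le])
  then have "real (card (R v j) * 2 ^ beta \<alpha>) \<le> real (2 * n)" by (simp only: of_nat_le_iff)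
  then show ?thesis by (simp add: pos_le_divide_eq)
qed

lemma proxy_cond_imp_eq:
  assumes vB: "v \<in> B0 n adj A1 \<alpha>" and u: "u \<in> S v j - S v (Suc j)"
    and pc: "proxy_cond n adj port A1 \<alpha> u (v', j')"
  shows "v' = v \<and> j' = j"
proof -
  have v: "v \<in> {1..n}" using vB by (rule B0_nodes)
  have v'B: "v' \<in> B0 n adj A1 \<alpha>" and ne: "S v' j' \<noteq> {}" and uMin: "u = Min (S v' j')"
    and ne': "S v' (Suc j') \<noteq> {}"
    using pc by (simp_all add: proxy_cond_def)
  have v': "v' \<in> {1..n}" using v'B by (rule B0_nodes)
  have u': "u \<in> S v' j' - S v' (Suc j')" using Min_chainS[OF v' ne] uMin by simp
  then have "v' = v" using Sadv_owner_unique[OF v v'] chainS_subset_Sadv u by blast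
  moreover have "j' = j"
  proof (rule ccontr)
    assume "j' \<noteq> j"
    then consider "Suc j' \<le> j" | "Suc j \<le> j'" by linarith
    then show False
      by cases (use chainS_antimono u u' \<open>v' = v\<close> in blast)+
  qed
  ultimately show ?thesis by simp
qed

lemma Pi_adv_Min:
  assumes vB: "v \<in> B0 n adj A1 \<alpha>" and ne: "S v (Suc j) \<noteq> {}"
  shows "Px (Min (S v j)) = Some (R v (Suc j))"
proof -
  have ne': "S v j \<noteq> {}" using ne chainS_Suc_subset[of v j] by blast
  have u: "Min (S v j) \<in> S v j - S v (Suc j)" by (rule Min_chainS[OF B0_nodes[OF vB] ne'])
  have pc: "proxy_cond n adj port A1 \<alpha> (Min (S v j)) (v, j)"
    using vB ne ne' by (auto simp: proxy_cond_def)
  have "(SOME vj. proxy_cond n adj port A1 \<alpha> (Min (S v j)) vj) = (v, j)"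
  proof (rule some_equality)
    fix vj
    assume "proxy_cond n adj port A1 \<alpha> (Min (S v j)) vj"
    then show "vj = (v, j)"
      using proxy_cond_imp_eq[OF vB u, of "fst vj" "snd vj"] by (simp add: prod_eq_iff)
  qed (rule pc)
  moreover have "\<exists>vj. proxy_cond n adj port A1 \<alpha> (Min (S v j)) vj" using pc by blast
  ultimately show ?thesis unfolding Pi_adv_def by (simp only: if_True Let_def fst_conv snd_conv)
qed

lemma Pi_adv_None:
  assumes vB: "v \<in> B0 n adj A1 \<alpha>" and u: "u \<in> S v j - S v (Suc j)"
    and no_proxy: "u \<noteq> Min (S v j) \<or> S v (Suc j) = {}"
  shows "Px u = None"
proof -
  have "\<not> proxy_cond n adj port A1 \<alpha> u vj" for vj
  proof
    assume pc: "proxy_cond n adj port A1 \<alpha> u vj"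
    then have "vj = (v, j)"
      using proxy_cond_imp_eq[OF vB u, of "fst vj" "snd vj"] by (simp add: prod_eq_iff)
    then have "u = Min (S v j)" "S v (Suc j) \<noteq> {}"
      using pc unfolding proxy_cond_def Let_def by auto
    with no_proxy show False by blast
  qed
  then have "\<not> (\<exists>vj. proxy_cond n adj port A1 \<alpha> u vj)" by blast
  then show ?thesis unfolding Pi_adv_def by (simp only: if_False)
qed

text \<open>Of the nodes woken in one round only the smallest one holds proxy advice, and it
  points to the next range, if any.\<close>
lemma proxy_ranges:
  assumes vB: "v \<in> B0 n adj A1 \<alpha>" and ne: "S v j \<noteq> {}"
  shows "map (\<lambda>u. the (Px u)) (sorted_list_of_set {u \<in> S v j - S v (Suc j). Px u \<noteq> None})
    = pending_ranges v (Suc j)"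
proof (cases "S v (Suc j) = {}")
  case True
  have none: "{u \<in> S v j - S v (Suc j). Px u \<noteq> None} = {}"
  proof (rule equals0I)
    fix u
    assume "u \<in> {u \<in> S v j - S v (Suc j). Px u \<noteq> None}"
    then show False using Pi_adv_None[OF vB, of u j] True by simp
  qed
  show ?thesis unfolding none using True by (simp add: pending_ranges_def)
next
  case False
  have only_Min: "{u \<in> S v j - S v (Suc j). Px u \<noteq> None} = {Min (S v j)}"
  proof (intro equalityI subsetI)
    fix u
    assume "u \<in> {u \<in> S v j - S v (Suc j). Px u \<noteq> None}"
    then show "u \<in> {Min (S v j)}" using Pi_adv_None[OF vB, of u j] by (cases "u = Min (S v j)") auto
  next
    fix u
    assume "u \<in> {Min (S v j)}"
    then show "u \<in> {u \<in> S v j - S v (Suc j). Px u \<noteq> None}"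
      using Min_chainS[OF B0_nodes[OF vB] ne] Pi_adv_Min[OF vB False] by simp
  qed
  show ?thesis unfolding only_Min using False Pi_adv_Min[OF vB False] by (simp add: pending_ranges_def)
qed

lemma port_image_R_minus_awake:
  assumes v: "v \<in> {1..n}" and aw0: "nbrs adj v - aw0 = Sadv adj A1 v" and ne: "S v j \<noteq> {}"
  shows "port v ` R v j - (aw0 \<union> (Sadv adj A1 v - S v j)) = S v j - S v (Suc j)"
proof -
  have Rports: "R v j \<subseteq> {1..deg adj v}" by (rule R_subset_ports[OF v ne])
  have sleeping: "port v p \<notin> aw0 \<union> (Sadv adj A1 v - S v j) \<longleftrightarrow> port v p \<in> S v j"
    if "p \<in> R v j" for p
    using port_in_nbrs(1)[OF v] that Rports aw0 chainS_subset_Sadv[of v j] by blast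
  have in_R: "u \<in> port v ` R v j \<longleftrightarrow> portnum adj port v u \<in> R v j" if "u \<in> S v j" for u
  proof
    assume "u \<in> port v ` R v j"
    then obtain p where "p \<in> R v j" "u = port v p" by blast
    then show "portnum adj port v u \<in> R v j" using port_in_nbrs(2)[OF v] Rports by auto
  next
    assume "portnum adj port v u \<in> R v j"
    moreover have "u \<in> nbrs adj v" using that chainS_subset_Sadv Sadv_subset_nbrs by blast
    ultimately show "u \<in> port v ` R v j" using portnum_in_ports(2)[OF v] by (metis imageI)
  qed
  show ?thesis
    unfolding chainS_Suc[OF ne] using sleeping in_R by blast
qed

lemma card_search_target:
  assumes v: "v \<in> {1..n}" and aw0: "nbrs adj v - aw0 = Sadv adj A1 v" and ne: "S v j \<noteq> {}"
  shows "card {p \<in> R v j. port v p \<notin> aw0 \<union> (Sadv adj A1 v - S v j)} = card (S v j - S v (Suc j))"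
  unfolding card_sleeping_ports[OF v R_subset_ports[OF v ne]]
    port_image_R_minus_awake[OF v aw0 ne] ..

text \<open>If the search returns exactly the ports of sleeping neighbours, the round wakes exactly
  the nodes that leave the chain.\<close>
lemma b0loop_round:
  assumes vB: "v \<in> B0 n adj A1 \<alpha>" and aw0: "nbrs adj v - aw0 = Sadv adj A1 v"
    and ne: "S v j \<noteq> {}" and st: "fst st = aw0 \<union> (Sadv adj A1 v - S v j)"
  obtains f where
    "b0loop Q n adj port Px v (Suc k) (pending_ranges v j) st
      = bind_pmf (Q n (R v j) {p \<in> R v j. port v p \<notin> fst st}) f"
    "\<And>m. f ({p \<in> R v j. port v p \<notin> fst st}, m)
      = b0loop Q n adj port Px v k (pending_ranges v (Suc j))
          (aw0 \<union> (Sadv adj A1 v - S v (Suc j)),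
           snd st + m + card (S v j - S v (Suc j)) + length (pending_ranges v (Suc j)))"
proof -
  let ?T = "{p \<in> R v j. port v p \<notin> fst st}"
  let ?X = "S v j - S v (Suc j)"
  have v: "v \<in> {1..n}" using vB by (rule B0_nodes)
  have Rports: "R v j \<subseteq> {1..deg adj v}" by (rule R_subset_ports[OF v ne])
  have woken: "port v ` R v j - fst st = ?X"
    using port_image_R_minus_awake[OF v aw0 ne] st by simp
  have woken_T: "port v ` ?T - fst st = ?X"
    unfolding image_filter_not_in Diff_idemp by (rule woken)
  have T_ports: "?T \<inter> {1..deg adj v} = ?T" using Rports by blast
  have card_T: "card ?T = card ?X" using card_search_target[OF v aw0 ne] st by simp
  have awake: "fst st \<union> ?X = aw0 \<union> (Sadv adj A1 v - S v (Suc j))"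
    using st chainS_Suc_subset[of v j] chainS_subset_Sadv[of v j] by auto
  have pending: "pending_ranges v j = [R v j]" using ne by (simp add: pending_ranges_def)
  note step = b0loop.simps(3)[of Q n adj port Px v k "R v j" "[]" st, folded pending]
  show ?thesis
  proof (rule that[OF step], goal_cases)
    case (1 m)
    show ?case
      by (simp only: prod.case Let_def T_ports woken_T proxy_ranges[OF vB ne] append_Nil
          awake card_T)
  qed
qed

lemma act_B0:
  assumes "v \<in> B0 n adj A1 \<alpha>"
  shows "act Q n adj port A1 \<alpha> v aw = b0loop Q n adj port Px v (n + 1) (pending_ranges v 0) (aw, 0)"
  using assms by (auto simp: act_def Lambda_def B0_def pending_ranges_def b0loop_Nil)

end

section \<open>Message cost with high probability\<close>

definition qsearch_success :: "nat \<Rightarrow> real \<Rightarrow> nat set \<Rightarrow> nat set \<Rightarrow> (nat set \<times> nat) set" where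
  "qsearch_success n K0 X T =
     {(F, m). F = T \<and> real m \<le> K0 * sqrt (real (card X) * real (max (card T) 1)) * ln (real n)}"

lemma qsearch_spec_success:
  assumes spec: "qsearch_spec Q K0 d" and n: "1 \<le> n" and X: "finite X" "T \<subseteq> X"
  shows "1 - 1 / real n powr d \<le> measure_pmf.prob (Q n X T) (qsearch_success n \<bar>K0\<bar> X T)"
proof -
  let ?s = "sqrt (real (card X) * real (max (card T) 1))"
  let ?G = "{(F, m). F = T \<and> real m \<le> K0 * ?s * ln (real n)}"
  have le: "K0 * ?s * ln (real n) \<le> \<bar>K0\<bar> * ?s * ln (real n)" using n by (intro mult_right_mono) auto
  then have "?G \<subseteq> qsearch_success n \<bar>K0\<bar> X T"
    unfolding qsearch_success_def by (auto intro: order_trans[OF _ le])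
  then have "measure_pmf.prob (Q n X T) ?G
      \<le> measure_pmf.prob (Q n X T) (qsearch_success n \<bar>K0\<bar> X T)"
    by (rule measure_pmf.finite_measure_mono) simp
  moreover have "1 - 1 / real n powr d \<le> measure_pmf.prob (Q n X T) ?G"
    using spec X unfolding qsearch_spec_def by blast
  ultimately show ?thesis by linarith
qed

lemma search_cost_le:
  fixes m r t l K L B :: real
  assumes m: "m \<le> K * sqrt (r * max t 1) * L" and "0 \<le> r" "r \<le> B" "1 \<le> t" "l \<le> 1"
    and "0 \<le> K" "0 \<le> L"
  shows "m + t + l \<le> (K * L * sqrt B + 2) * t"
proof -
  have "sqrt (r * max t 1) = sqrt r * sqrt t" using \<open>1 \<le> t\<close> by (simp add: real_sqrt_mult)
  also have "\<dots> \<le> sqrt B * t"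
  proof (rule mult_mono)
    have "sqrt t * 1 \<le> sqrt t * sqrt t" using \<open>1 \<le> t\<close> by (intro mult_left_mono) auto
    then show "sqrt t \<le> t" using \<open>1 \<le> t\<close> by simp
  qed (use assms in auto)
  finally have "K * sqrt (r * max t 1) * L \<le> K * (sqrt B * t) * L"
    using assms by (simp add: mult_left_mono mult_right_mono)
  with m have "m \<le> K * L * sqrt B * t" by (simp add: algebra_simps)
  then show ?thesis using assms by (simp add: algebra_simps)
qed

lemma two_n_div_powr_le:
  fixes n :: nat and c :: real
  assumes "2 \<le> n"
  shows "2 * real n / real n powr (c + 2) \<le> 1 / real n powr c"
proof -
  have np: "0 < real n" using assms by simp
  have "real n powr (c + 2) = real n powr c * (real n * real n)"
    using np by (simp add: powr_add power2_eq_square)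
  then have "2 * real n / real n powr (c + 2) = 2 / real n * (1 / real n powr c)"
    using np by (simp add: field_simps)
  also have "\<dots> \<le> 1 * (1 / real n powr c)"
    using assms by (intro mult_right_mono) auto
  finally show ?thesis by simp
qed

lemma per_node_cost_bound:
  fixes n b :: nat and K0 :: real
  assumes n2: "2 \<le> n" and bn: "2 ^ b \<le> n" and K0: "0 \<le> K0"
  shows "(K0 * ln (real n) * sqrt (2 * real n / 2 ^ b) + 2) * real n
     \<le> (sqrt 2 * K0 + 2 / ln 2) * sqrt (real n ^ 3 / 2 ^ b) * ln (real n)"
proof -
  define s where "s = sqrt (real n ^ 3 / 2 ^ b)"
  have np: "0 < real n" using n2 by simp
  have h1: "sqrt (2 * real n / 2 ^ b) * real n = sqrt 2 * s"
  proof -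
    have "sqrt (2 * real n / 2 ^ b) * real n = sqrt (2 * real n / 2 ^ b) * sqrt (real n ^ 2)"
      using np by simp
    also have "\<dots> = sqrt (2 * (real n ^ 3 / 2 ^ b))"
      by (simp only: real_sqrt_mult[symmetric])
        (simp add: field_simps power2_eq_square power3_eq_cube)
    finally show ?thesis unfolding s_def by (simp only: real_sqrt_mult)
  qed
  have h2: "real n \<le> s"
  proof -
    have "(2::real) ^ b \<le> real n" using bn by (metis of_nat_le_iff of_nat_numeral of_nat_power)
    then have "real n ^ 2 * 2 ^ b \<le> real n ^ 2 * real n" by (intro mult_left_mono) auto
    then have "real n ^ 2 \<le> real n ^ 3 / 2 ^ b"
      by (simp add: pos_le_divide_eq power2_eq_square power3_eq_cube)
    then have "sqrt (real n ^ 2) \<le> s" unfolding s_def by (rule real_sqrt_le_mono)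
    then show ?thesis using np by simp
  qed
  have "ln 2 \<le> ln (real n)" using n2 by simp
  then have h3: "2 * real n \<le> 2 / ln 2 * s * ln (real n)"
    using h2 np mult_mono[of "real n" s "ln 2" "ln (real n)"] by (simp add: field_simps)
  have "(K0 * ln (real n) * sqrt (2 * real n / 2 ^ b) + 2) * real n
      = sqrt 2 * K0 * s * ln (real n) + 2 * real n"
    using h1 by (simp add: algebra_simps)
  also have "\<dots> \<le> (sqrt 2 * K0 + 2 / ln 2) * s * ln (real n)"
    using h3 by (simp add: algebra_simps)
  finally show ?thesis unfolding s_def .
qed

lemma sorted_Cons_eq_tail:
  fixes k v :: nat
  assumes "sorted (v # vs)" "distinct (v # vs)" "set (v # vs) = {u \<in> X. k \<le> u}"
  shows "v \<in> X" "k \<le> v" "set vs = {u \<in> X. Suc v \<le> u}" "{u \<in> X. u < k} = {u \<in> X. u < v}"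
proof -
  have less: "\<forall>u\<in>set vs. v < u" using assms(1,2) by (auto simp: order_le_less)
  show "v \<in> X" "k \<le> v" using assms(3) by auto
  show "set vs = {u \<in> X. Suc v \<le> u}"
    using assms(3) less \<open>k \<le> v\<close> by (auto simp: Suc_le_eq)
  show "{u \<in> X. u < k} = {u \<in> X. u < v}"
    using assms(3) less \<open>k \<le> v\<close> by fastforce
qed

locale reliable_search = advice_setting +
  fixes Q :: qsearch and K0 \<epsilon> :: real
  assumes search_whp: "\<And>X T. finite X \<Longrightarrow> T \<subseteq> X \<Longrightarrow>
      1 - \<epsilon> \<le> measure_pmf.prob (Q n X T) (qsearch_success n K0 X T)"
    and eps_nonneg: "0 \<le> \<epsilon>" and K0_nonneg: "0 \<le> K0"
begin

text \<open>A round of a \<open>B\<^sub>0\<close> actor searches at most \<open>2n/2\<^sup>\<beta>\<close> ports and wakes \<open>t \<ge> 1\<close> nodes, so it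
  costs at most \<open>K\<^sub>0 \<surd>(2n t/2\<^sup>\<beta>) ln n + t + 1 \<le> cost_per_node \<cdot> t\<close> messages.\<close>
definition cost_per_node :: real where
  "cost_per_node = K0 * ln (real n) * sqrt (2 * real n / 2 ^ beta \<alpha>) + 2"

lemma cost_per_node_nonneg: "0 \<le> cost_per_node"
  using K0_nonneg n_pos by (simp add: cost_per_node_def)

definition within_budget :: "nat set \<Rightarrow> (nat set \<times> nat) set" where
  "within_budget W = {s. fst s = W \<and> real (snd s) \<le> cost_per_node * real (card W)}"

lemma round_within_budget:
  assumes v: "v \<in> {1..n}" and ne: "S v j \<noteq> {}"
    and m: "real m \<le> K0 * sqrt (real (card (R v j)) * real (max (card (S v j - S v (Suc j))) 1))
      * ln (real n)"
    and b: "real b \<le> cost_per_node * real (card (Sadv adj A1 v - S v j))"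
  shows "real (b + m + card (S v j - S v (Suc j)) + length (pending_ranges v (Suc j)))
    \<le> cost_per_node * real (card (Sadv adj A1 v - S v (Suc j)))"
proof -
  have "0 < card (S v j - S v (Suc j))"
    using Min_chainS[OF v ne] finite_chainS[of v j] by (auto simp: card_gt_0_iff)
  moreover have "length (pending_ranges v (Suc j)) \<le> 1" by (simp add: pending_ranges_def)
  ultimately have "real (m + card (S v j - S v (Suc j)) + length (pending_ranges v (Suc j)))
      \<le> cost_per_node * real (card (S v j - S v (Suc j)))"
    unfolding cost_per_node_def
    using search_cost_le[OF _ _ card_R_le] m K0_nonneg n_pos by (simp add: of_nat_max)
  then show ?thesis using b card_Sadv_minus_chainS_Suc[of v j] by (simp add: algebra_simps)
qed

lemma b0loop_whp:
  assumes vB: "v \<in> B0 n adj A1 \<alpha>" and aw0: "nbrs adj v - aw0 = Sadv adj A1 v"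
  shows "card (S v j) \<le> k \<Longrightarrow> fst st = aw0 \<union> (Sadv adj A1 v - S v j) \<Longrightarrow>
    real (snd st) \<le> cost_per_node * real (card (Sadv adj A1 v - S v j)) \<Longrightarrow>
    1 - \<epsilon> * real (card (S v j))
      \<le> measure_pmf.prob (b0loop Q n adj port Px v k (pending_ranges v j) st)
      {s. fst s = aw0 \<union> Sadv adj A1 v \<and> real (snd s) \<le> cost_per_node * real (card (Sadv adj A1 v))}"
proof (induction k arbitrary: j st)
  case 0
  then show ?case using finite_chainS[of v j] by (simp add: pending_ranges_def b0loop_Nil)
next
  case (Suc k)
  let ?G = "{s. fst s = aw0 \<union> Sadv adj A1 v \<and>
    real (snd s) \<le> cost_per_node * real (card (Sadv adj A1 v))}"
  show ?case
  proof (cases "S v j = {}")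
    case True
    then show ?thesis using Suc.prems by (simp add: pending_ranges_def b0loop_Nil)
  next
    case ne: False
    let ?T = "{p \<in> R v j. port v p \<notin> fst st}"
    let ?X = "S v j - S v (Suc j)"
    have v: "v \<in> {1..n}" using vB by (rule B0_nodes)
    obtain f where loop: "b0loop Q n adj port Px v (Suc k) (pending_ranges v j) st
        = bind_pmf (Q n (R v j) ?T) f"
      and cont: "\<And>m. f (?T, m) = b0loop Q n adj port Px v k (pending_ranges v (Suc j))
          (aw0 \<union> (Sadv adj A1 v - S v (Suc j)),
           snd st + m + card ?X + length (pending_ranges v (Suc j)))"
      using b0loop_round[OF vB aw0 ne Suc.prems(2), where Q=Q and k=k] by blast
    have card_T: "card ?T = card ?X" using card_search_target[OF v aw0 ne] Suc.prems(2) by simp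
    have decr: "card (S v (Suc j)) < card (S v j)" by (rule card_chainS_Suc_less[OF v ne])
    have "1 - (\<epsilon> + \<epsilon> * real (card (S v (Suc j))))
      \<le> measure_pmf.prob (bind_pmf (Q n (R v j) ?T) f) ?G"
    proof (rule measure_pmf_prob_bind_ge[OF search_whp])
      show "finite (R v j)" using R_subset_ports[OF v ne] finite_subset by blast
      show "?T \<subseteq> R v j" by blast
      show "0 \<le> \<epsilon> * real (card (S v (Suc j)))" using eps_nonneg by simp
      fix x
      assume "x \<in> qsearch_success n K0 (R v j) ?T"
      then obtain m where x: "x = (?T, m)"
        and m: "real m \<le> K0 * sqrt (real (card (R v j)) * real (max (card ?T) 1)) * ln (real n)"
        by (auto simp: qsearch_success_def)
      have "real (snd st + m + card ?X + length (pending_ranges v (Suc j)))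
          \<le> cost_per_node * real (card (Sadv adj A1 v - S v (Suc j)))"
        using round_within_budget[OF v ne _ Suc.prems(3)] m card_T by simp
      then show "1 - \<epsilon> * real (card (S v (Suc j))) \<le> measure_pmf.prob (f x) ?G"
        unfolding x cont using decr Suc.prems(1) by (intro Suc.IH) auto
    qed
    moreover have "\<epsilon> * (real (card (S v (Suc j))) + 1) \<le> \<epsilon> * real (card (S v j))"
      using decr eps_nonneg by (intro mult_left_mono) auto
    ultimately show ?thesis unfolding loop by (simp add: algebra_simps)
  qed
qed

lemma act_whp:
  assumes v: "v \<in> {1..n}" and aw: "nbrs adj v - aw = Sadv adj A1 v"
  shows "1 - \<epsilon> * (1 + real (card (Sadv adj A1 v))) \<le> measure_pmf.prob (act Q n adj port A1 \<alpha> v aw)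
    {(aw', m). aw' = aw \<union> Sadv adj A1 v \<and>
      (v \<in> B0 n adj A1 \<alpha> \<longrightarrow> real m \<le> cost_per_node * real (card (Sadv adj A1 v)))}"
    (is "_ \<le> measure_pmf.prob _ ?G")
proof (cases "v \<in> B0 n adj A1 \<alpha>")
  case True
  let ?H = "{s. fst s = aw \<union> Sadv adj A1 v \<and>
    real (snd s) \<le> cost_per_node * real (card (Sadv adj A1 v))}"
  have "card (S v 0) \<le> n + 1"
    using card_mono[OF finite_nbrs Sadv_subset_nbrs, of v] deg_le[of v] by (simp add: deg_def)
  then have "1 - \<epsilon> * real (card (S v 0)) \<le> measure_pmf.prob (act Q n adj port A1 \<alpha> v aw) ?H"
    unfolding act_B0[OF True] by (intro b0loop_whp[OF True aw]) simp_all
  moreover have "measure_pmf.prob (act Q n adj port A1 \<alpha> v aw) ?H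
      \<le> measure_pmf.prob (act Q n adj port A1 \<alpha> v aw) ?G"
    by (rule measure_pmf.finite_measure_mono) auto
  ultimately show ?thesis using eps_nonneg by (simp add: distrib_left)
next
  case False
  let ?P = "{1..deg adj v}"
  let ?T = "{p \<in> ?P. port v p \<notin> aw}"
  have search_all: "\<alpha> \<le> 2 \<or> gbit adj A1 \<alpha> v" using False v by (auto simp: B0_def)
  have woken: "port v ` ?T = Sadv adj A1 v"
    unfolding image_filter_not_in port_image_ports[OF v] by (rule aw)
  have T_ports: "?T \<inter> ?P = ?T" by blast
  have "1 - (\<epsilon> + 0) \<le> measure_pmf.prob (act Q n adj port A1 \<alpha> v aw) ?G"
    unfolding act_def if_P[OF search_all]
  proof (rule measure_pmf_prob_bind_ge[where \<delta>'=0, OF search_whp], goal_cases)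
    case (3 x)
    then obtain m where "x = (?T, m)" by (auto simp: qsearch_success_def)
    then show ?case using woken T_ports False by simp
  qed auto
  moreover have "\<epsilon> \<le> \<epsilon> * (1 + real (card (Sadv adj A1 v)))"
    using eps_nonneg by (simp add: distrib_left)
  ultimately show ?thesis by linarith
qed

lemma run_actors_whp:
  assumes j: "1 \<le> j"
  shows "sorted vs \<Longrightarrow> distinct vs \<Longrightarrow> set vs = {u \<in> A j. k \<le> u} \<Longrightarrow>
    st \<in> within_budget (awake_by j \<union> Scum adj A1 j k) \<Longrightarrow>
    1 - \<epsilon> * (real (length vs) + real (card (Sset adj A1 j - Scum adj A1 j k)))
      \<le> measure_pmf.prob (run_actors Q n adj port A1 \<alpha> vs st)
        (within_budget (awake_by j \<union> Sset adj A1 j))"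
proof (induction vs arbitrary: k st)
  case Nil
  have "{u \<in> A j. u < k} = A j" using Nil.prems(3) by auto
  then have "Scum adj A1 j k = Sset adj A1 j" unfolding Scum_eq Sset_def by auto
  then show ?case using Nil.prems eps_nonneg by simp
next
  case (Cons v vs)
  let ?Sv = "Sadv adj A1 v"
  let ?Ss = "Sset adj A1 j"
  note tail = sorted_Cons_eq_tail[OF Cons.prems(1-3)]
  have v: "v \<in> {1..n}" using tail(1) Aset_subset by blast
  have Scum_k: "Scum adj A1 j k = Scum adj A1 j v" unfolding Scum_eq tail(4) ..
  have st: "fst st = awake_by j \<union> Scum adj A1 j v"
    and budget: "real (snd st) \<le> cost_per_node * real (card (fst st))"
    using Cons.prems(4) unfolding within_budget_def Scum_k by auto
  have sleeping: "nbrs adj v - fst st = ?Sv" unfolding st by (rule nbrs_minus_awake[OF j tail(1)])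
  note card_step = card_actor_step[OF j tail(1)]
  have "1 - (\<epsilon> * (1 + real (card ?Sv)) +
      \<epsilon> * (real (length vs) + real (card (?Ss - Scum adj A1 j (Suc v)))))
      \<le> measure_pmf.prob (run_actors Q n adj port A1 \<alpha> (v # vs) st)
        (within_budget (awake_by j \<union> ?Ss))"
    unfolding run_actors.simps
  proof (rule measure_pmf_prob_bind_ge[OF act_whp[OF v sleeping]], goal_cases)
    case (1 x)
    then obtain m where x: "x = (fst st \<union> ?Sv, m)"
      and m: "v \<in> B0 n adj A1 \<alpha> \<longrightarrow> real m \<le> cost_per_node * real (card ?Sv)" by auto
    have "0 \<le> cost_per_node * real (card ?Sv)" using cost_per_node_nonneg by simp
    then have "real (snd st + (if v \<in> B0 n adj A1 \<alpha> then m else 0))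
        \<le> real (snd st) + cost_per_node * real (card ?Sv)"
      using m by auto
    also have "\<dots> \<le> cost_per_node * real (card (fst st \<union> ?Sv))"
      using budget card_step(1) st by (simp add: algebra_simps)
    finally have "(fst st \<union> ?Sv, snd st + (if v \<in> B0 n adj A1 \<alpha> then m else 0))
        \<in> within_budget (awake_by j \<union> Scum adj A1 j (Suc v))"
      unfolding within_budget_def Scum_Suc_actor[OF j tail(1)] st by (simp add: Un_assoc)
    then show ?case unfolding x prod.case by (rule Cons.IH[rotated 3]) (use Cons.prems tail in auto)
  next
    case 2
    show ?case using eps_nonneg by simp
  qed
  then show ?case using card_step(2) Scum_k by (simp add: algebra_simps)
qed

lemma epochs_whp:
  "1 \<le> j \<Longrightarrow> st \<in> within_budget (awake_by j) \<Longrightarrow>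
   1 - \<epsilon> * (real (card (A j)) + 2 * (real n - real (card (awake_by j))))
     \<le> measure_pmf.prob (epochs Q n adj port A1 \<alpha> k (A j) st)
       {s. real (snd s) \<le> cost_per_node * real n}"
proof (induction k arbitrary: j st)
  case 0
  have awake_le: "card (awake_by j) \<le> n" using card_mono[OF _ awake_by_subset[of j]] by simp
  then have "cost_per_node * real (card (awake_by j)) \<le> cost_per_node * real n"
    using cost_per_node_nonneg by (intro mult_left_mono) auto
  then have "real (snd st) \<le> cost_per_node * real n"
    using 0(2) unfolding within_budget_def by auto
  moreover have "0 \<le> \<epsilon> * (real (card (A j)) + 2 * (real n - real (card (awake_by j))))"
    using eps_nonneg awake_le by simp
  ultimately show ?case by simp
next
  case (Suc k)
  let ?G = "{s. real (snd s) \<le> cost_per_node * real n}"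
  have j: "1 \<le> j" by fact
  have Sset: "Sset adj A1 j = A (Suc j)" by (rule Sset_eq_Aset_Suc[OF j])
  have st: "fst st = awake_by j" using Suc.prems(2) by (simp add: within_budget_def)
  have awake_Suc: "awake_by j \<union> Sset adj A1 j = awake_by (Suc j)"
    using Sset awake_by_Suc[of j] by simp
  have woken: "awake_by (Suc j) - fst st = A (Suc j)"
    using awake_by_Suc[of j] Aset_Suc_disjoint_awake_by[of j] st by blast
  have card_awake: "card (awake_by (Suc j)) = card (awake_by j) + card (A (Suc j))"
    using awake_by_Suc[of j] Aset_Suc_disjoint_awake_by[of j] finite_awake_by finite_Aset
    by (simp add: card_Un_disjoint Int_commute)
  have run: "1 - \<epsilon> * (real (card (A j)) + real (card (A (Suc j))))
      \<le> measure_pmf.prob (run_actors Q n adj port A1 \<alpha> (sorted_list_of_set (A j)) st)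
        (within_budget (awake_by (Suc j)))"
    using run_actors_whp[OF j, of "sorted_list_of_set (A j)" 0 st] Suc.prems Sset
      finite_Aset[of j] awake_Suc by simp
  have "1 - (\<epsilon> * (real (card (A j)) + real (card (A (Suc j)))) +
      \<epsilon> * (real (card (A (Suc j))) + 2 * (real n - real (card (awake_by (Suc j))))))
    \<le> measure_pmf.prob (epochs Q n adj port A1 \<alpha> (Suc k) (A j) st) ?G"
    unfolding epochs.simps
  proof (rule measure_pmf_prob_bind_ge[OF run], goal_cases)
    case (1 st')
    moreover from this have "fst st' - fst st = A (Suc j)"
      using woken by (simp add: within_budget_def)
    ultimately show ?case using Suc.IH[of "Suc j" st'] by simp
  next
    case 2
    show ?case using eps_nonneg card_mono[OF _ awake_by_subset[of "Suc j"]] by simp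
  qed
  then show ?case using card_awake by (simp add: algebra_simps)
qed

end

lemma (in wakeup_graph) B0_cost_whp:
  assumes spec: "qsearch_spec Q K0 (c + 2)" and beta: "2 ^ beta \<alpha> \<le> n" and n: "2 \<le> n"
  shows "1 - 1 / real n powr c \<le> measure_pmf.prob (B0_cost Q n adj port A1 \<alpha>)
    {x. real x \<le> (sqrt 2 * \<bar>K0\<bar> + 2 / ln 2) * sqrt (real n ^ 3 / 2 ^ beta \<alpha>) * ln (real n)}"
proof -
  define \<epsilon> where "\<epsilon> = 1 / real n powr (c + 2)"
  interpret reliable_search n adj port A1 \<alpha> Q "\<bar>K0\<bar>" \<epsilon>
  proof
    show "2 ^ beta \<alpha> \<le> n" by (rule beta)
    show "1 - \<epsilon> \<le> measure_pmf.prob (Q n X T) (qsearch_success n \<bar>K0\<bar> X T)"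
      if "finite X" "T \<subseteq> X" for X T
      unfolding \<epsilon>_def using qsearch_spec_success[OF spec n_pos that] .
  qed (simp_all add: \<epsilon>_def)
  let ?X = "{x. real x \<le> (sqrt 2 * \<bar>K0\<bar> + 2 / ln 2) * sqrt (real n ^ 3 / 2 ^ beta \<alpha>)
    * ln (real n)}"
  let ?run = "epochs Q n adj port A1 \<alpha> (n + 1) A1 (A1, 0)"
  let ?err = "\<epsilon> * (real (card A1) + 2 * (real n - real (card A1)))"
  have awake_1: "awake_by (Suc 0) = A1" by (simp add: awake_by_def atMost_Suc)
  have "card A1 \<le> n" using card_mono[OF _ A1_subset] by simp
  then have "?err \<le> \<epsilon> * (2 * real n)" using eps_nonneg by (intro mult_left_mono) auto
  also have "\<dots> \<le> 1 / real n powr c" using two_n_div_powr_le[OF n, of c] by (simp add: \<epsilon>_def)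
  finally have "1 - 1 / real n powr c \<le> 1 - ?err" by simp
  also have "\<dots> \<le> measure_pmf.prob ?run {s. real (snd s) \<le> cost_per_node * real n}"
    using epochs_whp[of "Suc 0" "(A1, 0)" "n + 1"] awake_1 cost_per_node_nonneg
    by (simp add: within_budget_def)
  also have "\<dots> \<le> measure_pmf.prob ?run (snd -` ?X)"
  proof (rule measure_pmf.finite_measure_mono)
    show "{s. real (snd s) \<le> cost_per_node * real n} \<subseteq> snd -` ?X"
      using per_node_cost_bound[OF n beta, of "\<bar>K0\<bar>"] by (auto simp: cost_per_node_def)
  qed simp
  also have "\<dots> = measure_pmf.prob (B0_cost Q n adj port A1 \<alpha>) ?X"
    by (simp add: B0_cost_def)
  finally show ?thesis .
qed

theorem lemma7:
  fixes c :: real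
  assumes "c > 0"
  shows "\<exists>d::real. \<forall>(Q::qsearch) (K0::real). qsearch_spec Q K0 d \<longrightarrow>
     (\<exists>K::real. \<forall>n adj port A1 (\<alpha>::nat).
        wakeup_instance n adj port A1 \<and> 2 ^ beta \<alpha> \<le> n \<longrightarrow>
        measure_pmf.prob (B0_cost Q n adj port A1 \<alpha>)
          {x. real x \<le> K * sqrt (real n ^ 3 / 2 ^ beta \<alpha>) * ln (real n)}
        \<ge> 1 - 1 / real n powr c)"
proof (rule exI[of _ "c + 2"], intro allI impI, goal_cases)
  case (1 Q K0)
  note spec = this
  show ?case
  proof (rule exI[of _ "sqrt 2 * \<bar>K0\<bar> + 2 / ln 2"], intro allI impI, goal_cases)
    case (1 n adj port A1 \<alpha>)
    then interpret wakeup_graph n adj port A1 by unfold_locales simp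
    show ?case
    proof (cases "n = 1")
      case False
      then have "2 \<le> n" using n_pos by simp
      with spec 1 show ?thesis using B0_cost_whp by simp
    qed simp
  qed
qed

end
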